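(* Let $i,j\in\mathbb{N}=\{0,1,2,\dots\}$ and let $w\in\{0,1\}^*$ be a $\frac{7}{3}$-power-free word with $|w|=(7+2j)2^i-1$. Let $a\in\{0,1\}$. Then the word $waw$ has a subword $x$ with $|x|\leq 7\cdot 2^i$ such that $x$ is a $\beta$-power for some rational $\beta\ge\frac{7}{3}$.
   Context: A word $w'$ is a subword of $w$ if $w=uw'v$ for some words $u,v$. For a rational $\beta\ge 1$, a $\beta$-power is a word of the form $y^ny'$ with $y$ a nonempty word, $y'$ a prefix of $y$, $n$ a nonnegative integer and $n+|y'|/|y|=\beta$. A word is $\alpha$-power-free if none of its subwords is a $\beta$-power for any rational $\beta\geq\alpha$. *)

theory Defs
  imports Complex_Main "HOL-Library.Sublist"
begin

definition is_subword :: "'a list \<Rightarrow> 'a list \<Rightarrow> bool" where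
  "is_subword x w \<longleftrightarrow> (\<exists>u v. w = u @ x @ v)"

definition is_beta_power :: "'a list \<Rightarrow> rat \<Rightarrow> bool" where
  "is_beta_power x \<beta> \<longleftrightarrow>
     (\<exists>y y' (n::nat). y \<noteq> [] \<and> prefix y' y \<and> x = concat (replicate n y) @ y' \<and>
        of_nat n + of_nat (length y') / of_nat (length y) = \<beta>)"

definition power_free :: "rat \<Rightarrow> 'a list \<Rightarrow> bool" where
  "power_free \<alpha> w \<longleftrightarrow> \<not> (\<exists>x \<beta>. is_subword x w \<and> \<beta> \<ge> \<alpha> \<and> is_beta_power x \<beta>)"

end

theory Submission
  imports Defs
begin

(* Call k a double of w if w ! k = w ! (k + 1). In a binary word without 7/3-powers of length
   at most 7, any two doubles away from the ends are at even distance: distance 1 gives a cube,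
   distance 3 a 7/3-power of period 3, and a gap of at least 5 free of doubles an alternating
   factor of exponent 5/2.
   If |w| is even, a double of w and its copy in the second half of w a w are at the odd
   distance |w| + 1, so w a w has a short power. If |w| is odd, the common parity of the doubles,
   together with the doubles the middle letter a could create, forces w a w to be, up to one
   letter at an end, the Thue-Morse image of y b y, where y has length (|w| - 1) / 2 and its
   image is a factor of w. The Thue-Morse morphism 0 -> 01, 1 -> 10 maps beta-powers to
   beta-powers of twice the length, so y is 7/3-power-free and induction on i applies. *)

definition thue_morse :: "bool list \<Rightarrow> bool list" where
  "thue_morse xs = concat (map (\<lambda>b. [b, \<not> b]) xs)"

lemma thue_morse_Nil [simp]: "thue_morse [] = []"
  by (simp add: thue_morse_def)

lemma thue_morse_Cons [simp]: "thue_morse (b # xs) = b # (\<not> b) # thue_morse xs"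
  by (simp add: thue_morse_def)

lemma thue_morse_append [simp]: "thue_morse (xs @ ys) = thue_morse xs @ thue_morse ys"
  by (simp add: thue_morse_def)

lemma length_thue_morse [simp]: "length (thue_morse xs) = 2 * length xs"
  by (induction xs) auto

lemma thue_morse_concat_replicate:
  "thue_morse (concat (replicate n y)) = concat (replicate n (thue_morse y))"
  by (induction n) auto

lemma prefix_thue_morse: "prefix u v \<Longrightarrow> prefix (thue_morse u) (thue_morse v)"
  by (auto simp: prefix_def)

lemma is_beta_power_thue_morse:
  assumes "is_beta_power x \<beta>"
  shows "is_beta_power (thue_morse x) \<beta>"
proof -
  obtain y y' n where y: "y \<noteq> []" "prefix y' y" "x = concat (replicate n y) @ y'"
    and \<beta>: "of_nat n + of_nat (length y') / of_nat (length y) = \<beta>"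
    using assms unfolding is_beta_power_def by blast
  have "thue_morse y \<noteq> []" using y(1) by (cases y) auto
  moreover have "of_nat (length (thue_morse y')) / of_nat (length (thue_morse y)) =
      (of_nat (length y') / of_nat (length y) :: rat)"
    by simp
  ultimately show ?thesis
    unfolding is_beta_power_def using y \<beta>
    by (intro exI[of _ "thue_morse y"] exI[of _ "thue_morse y'"] exI[of _ n])
      (simp add: prefix_thue_morse thue_morse_concat_replicate)
qed

lemma thue_morse_preimage_exists:
  fixes v :: "bool list"
  assumes "even (length v)" "\<And>t. even t \<Longrightarrow> t + 1 < length v \<Longrightarrow> v ! t \<noteq> v ! (t + 1)"
  shows "\<exists>y. v = thue_morse y"
  using assms
proof (induction v rule: induct_list012)
  case 1
  show ?case by (metis thue_morse_Nil)
next
  case (2 b)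
  then show ?case by simp
next
  case (3 b b' v)
  have "\<exists>y. v = thue_morse y"
  proof (rule "3.IH"(1))
    show "even (length v)" using "3.prems"(1) by simp
    show "v ! t \<noteq> v ! (t + 1)" if "even t" "t + 1 < length v" for t
      using "3.prems"(2)[of "t + 2"] that by simp
  qed
  then obtain y where "v = thue_morse y" ..
  moreover have "b' = (\<not> b)" using "3.prems"(2)[of 0] by auto
  ultimately have "b # b' # v = thue_morse (b # y)" by simp
  then show ?case ..
qed

lemma is_subword_trans: "is_subword x y \<Longrightarrow> is_subword y z \<Longrightarrow> is_subword x z"
  unfolding is_subword_def by (metis append.assoc)

lemma is_subword_thue_morse: "is_subword x w \<Longrightarrow> is_subword (thue_morse x) (thue_morse w)"
  unfolding is_subword_def by (metis thue_morse_append)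

lemma is_subword_window:
  "k + m \<le> length w \<Longrightarrow> is_subword (map (\<lambda>t. w ! (k + t)) [0..<m]) w"
proof -
  assume "k + m \<le> length w"
  then have "map (\<lambda>t. w ! (k + t)) [0..<m] = take m (drop k w)"
    by (intro nth_equalityI) auto
  then show ?thesis
    unfolding is_subword_def by (metis append_take_drop_id)
qed

lemma power_free_subword: "power_free \<alpha> w \<Longrightarrow> is_subword v w \<Longrightarrow> power_free \<alpha> v"
  unfolding power_free_def using is_subword_trans by blast

lemma power_free_thue_morse_preimage: "power_free \<alpha> (thue_morse y) \<Longrightarrow> power_free \<alpha> y"
  unfolding power_free_def using is_subword_thue_morse is_beta_power_thue_morse by blast

definition has_short_power :: "rat \<Rightarrow> nat \<Rightarrow> 'a list \<Rightarrow> bool" where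
  "has_short_power \<alpha> L w \<longleftrightarrow>
     (\<exists>x \<beta>. is_subword x w \<and> length x \<le> L \<and> \<beta> \<ge> \<alpha> \<and> is_beta_power x \<beta>)"

lemma has_short_powerI:
  "is_subword x w \<Longrightarrow> length x \<le> L \<Longrightarrow> \<alpha> \<le> \<beta> \<Longrightarrow> is_beta_power x \<beta> \<Longrightarrow>
    has_short_power \<alpha> L w"
  unfolding has_short_power_def by blast

lemma has_short_power_mono: "has_short_power \<alpha> L w \<Longrightarrow> L \<le> L' \<Longrightarrow> has_short_power \<alpha> L' w"
  unfolding has_short_power_def by fastforce

lemma has_short_power_subword:
  "has_short_power \<alpha> L v \<Longrightarrow> is_subword v w \<Longrightarrow> has_short_power \<alpha> L w"
  unfolding has_short_power_def using is_subword_trans by blast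

lemma has_short_power_thue_morse:
  assumes "has_short_power \<alpha> L v" "is_subword (thue_morse v) w"
  shows "has_short_power \<alpha> (2 * L) w"
  using assms is_subword_thue_morse is_subword_trans is_beta_power_thue_morse
  unfolding has_short_power_def by fastforce

lemma is_beta_power_3: "is_beta_power [c, c, c] 3"
  unfolding is_beta_power_def
  by (intro exI[of _ "[c]"] exI[of _ "[]"] exI[of _ 3]) (simp add: numeral_3_eq_3)

lemma is_beta_power_5_2: "is_beta_power [p, q, p, q, p] (5/2)"
  unfolding is_beta_power_def
  by (intro exI[of _ "[p, q]"] exI[of _ "[p]"] exI[of _ 2]) (simp add: numeral_2_eq_2)

lemma is_beta_power_7_3: "is_beta_power [p, q, r, p, q, r, p] (7/3)"
  unfolding is_beta_power_def
  by (intro exI[of _ "[p, q, r]"] exI[of _ "[p]"] exI[of _ 2]) (simp add: numeral_2_eq_2)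

lemma no_cube:
  assumes "\<not> has_short_power (7/3) 7 w" "k + 2 < length w" "w ! k = w ! (k + 1)"
  shows "w ! (k + 1) \<noteq> w ! (k + 2)"
proof
  assume "w ! (k + 1) = w ! (k + 2)"
  moreover have "is_subword (map (\<lambda>t. w ! (k + t)) [0..<3]) w"
    using assms(2) by (intro is_subword_window) simp
  ultimately have "is_subword [w ! k, w ! k, w ! k] w"
    using assms(3) by (simp add: numeral_3_eq_3 numeral_2_eq_2)
  then have "has_short_power (7/3) 7 w"
    by (rule has_short_powerI[OF _ _ _ is_beta_power_3]) simp_all
  with assms(1) show False ..
qed

lemma double_in_window:
  fixes w :: "bool list"
  assumes "\<not> has_short_power (7/3) 7 w" "k + 4 < length w"
  shows "\<exists>t<4. w ! (k + t) = w ! (k + t + 1)"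
proof (rule ccontr)
  assume "\<not> ?thesis"
  then have neq: "w ! (k + t) \<noteq> w ! (k + t + 1)" if "t < 4" for t
    using that by blast
  have "w ! (k + 2) = w ! k" "w ! (k + 3) = w ! (k + 1)" "w ! (k + 4) = w ! k"
    using neq[of 0] neq[of 1] neq[of 2] neq[of 3] by (auto simp: numeral_eq_Suc)
  moreover have "is_subword (map (\<lambda>t. w ! (k + t)) [0..<5]) w"
    using assms(2) by (intro is_subword_window) simp
  ultimately have "is_subword [w ! k, w ! (k + 1), w ! k, w ! (k + 1), w ! k] w"
    by (simp add: numeral_eq_Suc)
  then have "has_short_power (7/3) 7 w"
    by (rule has_short_powerI[OF _ _ _ is_beta_power_5_2]) simp_all
  with assms(1) show False ..
qed

lemma no_doubles_at_distance_3:
  fixes w :: "bool list"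
  assumes spf: "\<not> has_short_power (7/3) 7 w" and "k + 6 < length w"
    and "w ! (k + 1) = w ! (k + 2)" "w ! (k + 4) = w ! (k + 5)"
  shows False
proof -
  have "w ! k \<noteq> w ! (k + 1)" "w ! (k + 2) \<noteq> w ! (k + 3)" "w ! (k + 3) \<noteq> w ! (k + 4)"
    "w ! (k + 5) \<noteq> w ! (k + 6)"
    using no_cube[OF spf, of k] no_cube[OF spf, of "k + 1"] no_cube[OF spf, of "k + 3"]
      no_cube[OF spf, of "k + 4"] assms
    by (auto simp: numeral_eq_Suc)
  then have "w ! (k + 3) = w ! k" "w ! (k + 4) = w ! (k + 1)" "w ! (k + 5) = w ! (k + 2)"
    "w ! (k + 6) = w ! k"
    using assms by (auto simp: numeral_eq_Suc)
  moreover have "is_subword (map (\<lambda>t. w ! (k + t)) [0..<7]) w"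
    using assms(2) by (intro is_subword_window) simp
  ultimately have
    "is_subword [w ! k, w ! (k + 1), w ! (k + 2), w ! k, w ! (k + 1), w ! (k + 2), w ! k] w"
    by (simp add: numeral_eq_Suc)
  then have "has_short_power (7/3) 7 w"
    by (rule has_short_powerI[OF _ _ _ is_beta_power_7_3]) simp_all
  with spf show False ..
qed

lemma doubles_even_distance:
  fixes w :: "bool list"
  assumes spf: "\<not> has_short_power (7/3) 7 w"
  shows "0 < k \<Longrightarrow> k < k' \<Longrightarrow> k' + 2 < length w \<Longrightarrow> w ! k = w ! (k + 1) \<Longrightarrow>
    w ! k' = w ! (k' + 1) \<Longrightarrow> even (k' - k)"
proof (induction "k' - k" arbitrary: k k' rule: less_induct)
  case less
  show ?case
  proof (cases "\<exists>m. k < m \<and> m < k' \<and> w ! m = w ! (m + 1)")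
    case True
    then obtain m where m: "k < m" "m < k'" "w ! m = w ! (m + 1)" by blast
    have "even (m - k)" "even (k' - m)"
      using less.hyps[of m k] less.hyps[of k' m] less.prems m by simp_all
    then show ?thesis using m by (simp add: even_diff_nat)
  next
    case False
    have "k' < k + 5"
    proof (rule ccontr)
      assume "\<not> k' < k + 5"
      then obtain t where "t < 4" "w ! (k + 1 + t) = w ! (k + 1 + t + 1)"
        using double_in_window[OF spf, of "k + 1"] less.prems by auto
      moreover have "k < k + 1 + t" "k + 1 + t < k'"
        using \<open>\<not> k' < k + 5\<close> \<open>t < 4\<close> by simp_all
      ultimately show False using False by blast
    qed
    moreover have "k' \<noteq> k + 1"
      using no_cube[OF spf, of k] less.prems by auto
    moreover have "k' \<noteq> k + 3"
    proof
      assume "k' = k + 3"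
      obtain k0 where "k = k0 + 1" using \<open>0 < k\<close> by (metis Suc_eq_plus1 gr0_conv_Suc)
      then show False
        using no_doubles_at_distance_3[OF spf, of k0] less.prems \<open>k' = k + 3\<close>
        by (simp add: numeral_eq_Suc)
    qed
    ultimately show ?thesis using less.prems by presburger
  qed
qed

lemma doubles_same_parity:
  fixes w :: "bool list"
  assumes spf: "\<not> has_short_power (7/3) 7 w"
    and "0 < p" "p + 2 < length w" "w ! p = w ! (p + 1)"
    and "0 < q" "q + 2 < length w" "w ! q = w ! (q + 1)"
  shows "even p \<longleftrightarrow> even q"
proof (cases p q rule: linorder_cases)
  case less
  then show ?thesis
    using doubles_even_distance[OF spf, of p q] assms by (simp add: even_diff_nat)
next
  case greater
  then show ?thesis
    using doubles_even_distance[OF spf, of q p] assms by (simp add: even_diff_nat)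
qed simp

lemma doubled_word_doubles:
  assumes "q + 1 < length w" "w ! q = w ! (q + 1)"
  shows "(w @ [a] @ w) ! q = (w @ [a] @ w) ! (q + 1)"
    and "(w @ [a] @ w) ! (length w + 1 + q) = (w @ [a] @ w) ! (length w + 1 + q + 1)"
  using assms by (simp_all add: nth_append)

lemma even_doubled_word_has_short_power:
  fixes w :: "bool list"
  assumes "even (length w)" "6 \<le> length w"
  shows "has_short_power (7/3) 7 (w @ [a] @ w)"
proof (rule ccontr)
  assume spf: "\<not> has_short_power (7/3) 7 (w @ [a] @ w)"
  then have spf_w: "\<not> has_short_power (7/3) 7 w"
    by (metis has_short_power_subword is_subword_def append_Nil2)
  have no_double: False if "0 < p" "p + 1 < length w" "w ! p = w ! (p + 1)"
    "q + 2 < length w" "w ! q = w ! (q + 1)" "even p \<noteq> even (length w + 1 + q)" for p q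
  proof -
    have "(w @ [a] @ w) ! p = (w @ [a] @ w) ! (p + 1)"
      using doubled_word_doubles(1)[of p w] that(2,3) by simp
    moreover have "(w @ [a] @ w) ! (length w + 1 + q) = (w @ [a] @ w) ! (length w + 1 + q + 1)"
      using doubled_word_doubles(2)[of q w] that(4,5) by simp
    ultimately have "even p \<longleftrightarrow> even (length w + 1 + q)"
      using doubles_same_parity[OF spf, of p "length w + 1 + q"] that(1,2,4) by simp
    with that(6) show False by simp
  qed
  obtain t0 where t0: "t0 < 4" "w ! t0 = w ! (t0 + 1)"
    using double_in_window[OF spf_w, of 0] assms(2) by auto
  obtain t1 where t1: "t1 < 4" "w ! (1 + t1) = w ! (1 + t1 + 1)"
    using double_in_window[OF spf_w, of 1] assms(2) by auto
  show False
  proof (cases "0 < t0")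
    case True
    then show False using no_double[of t0 t0] t0 assms by simp
  next
    case False
    show False
    proof (cases "t1 < 3")
      case True
      then show False using no_double[of "1 + t1" "1 + t1"] t1 assms by simp
    next
      case False
      then have "t1 = 3" using t1(1) by simp
      then show False using no_double[of 4 0] t0 t1 \<open>\<not> 0 < t0\<close> assms by simp
    qed
  qed
qed

lemma doubled_word_desubstitution_Cons:
  fixes w :: "bool list"
  assumes "odd (length w)" "\<And>k. odd k \<Longrightarrow> k + 1 < length w \<Longrightarrow> w ! k \<noteq> w ! (k + 1)"
    and "a \<noteq> w ! 0"
  shows "\<exists>y. length y = length w div 2 \<and> is_subword (thue_morse y) w \<and>
    is_subword (thue_morse (y @ [a] @ y)) (w @ [a] @ w)"
proof -
  obtain c v where w: "w = c # v" using assms(1) by (cases w) auto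
  have "\<exists>y. v = thue_morse y"
  proof (rule thue_morse_preimage_exists)
    show "even (length v)" using assms(1) w by simp
    show "v ! t \<noteq> v ! (t + 1)" if "even t" "t + 1 < length v" for t
      using assms(2)[of "t + 1"] that w by simp
  qed
  then obtain y where v: "v = thue_morse y" ..
  have "length y = length w div 2" using w v by simp
  moreover have "w = [c] @ thue_morse y @ []" using w v by simp
  moreover have "w @ [a] @ w = [c] @ thue_morse (y @ [a] @ y) @ []"
    using assms(3) w v by simp
  ultimately show ?thesis
    unfolding is_subword_def by blast
qed

lemma doubled_word_desubstitution_snoc:
  fixes w :: "bool list"
  assumes "odd (length w)" "\<And>k. even k \<Longrightarrow> k + 1 < length w \<Longrightarrow> w ! k \<noteq> w ! (k + 1)"
    and "a \<noteq> last w"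
  shows "\<exists>y b. length y = length w div 2 \<and> is_subword (thue_morse y) w \<and>
    is_subword (thue_morse (y @ [b] @ y)) (w @ [a] @ w)"
proof -
  obtain v c where w: "w = v @ [c]" using assms(1) by (cases w rule: rev_cases) auto
  have "\<exists>y. v = thue_morse y"
  proof (rule thue_morse_preimage_exists)
    show "even (length v)" using assms(1) w by simp
    show "v ! t \<noteq> v ! (t + 1)" if "even t" "t + 1 < length v" for t
      using assms(2)[of t] that w by (simp add: nth_append)
  qed
  then obtain y where v: "v = thue_morse y" ..
  have "length y = length w div 2" using w v by simp
  moreover have "w = [] @ thue_morse y @ [c]" using w v by simp
  moreover have "w @ [a] @ w = [] @ thue_morse (y @ [c] @ y) @ [c]"
    using assms(3) w v by simp
  ultimately show ?thesis
    unfolding is_subword_def by blast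
qed

lemma odd_doubled_word_double_image:
  assumes "odd (length w)" "k + 1 < length w" "w ! k = w ! (k + 1)"
  shows "\<exists>p. 0 < p \<and> p + 2 < length (w @ [a] @ w) \<and>
    (w @ [a] @ w) ! p = (w @ [a] @ w) ! (p + 1) \<and> (even p \<longleftrightarrow> even k)"
proof (cases "k = 0")
  case True
  have "length w \<noteq> 2" using assms(1) by auto
  then show ?thesis
    using doubled_word_doubles(2)[OF assms(2,3)] assms True
    by (intro exI[of _ "length w + 1"]) auto
next
  case False
  then show ?thesis
    using doubled_word_doubles(1)[OF assms(2,3)] assms
    by (intro exI[of _ k]) auto
qed

lemma odd_doubled_word_thue_morse_desubstitution:
  fixes w :: "bool list"
  assumes spf: "\<not> has_short_power (7/3) 7 (w @ [a] @ w)"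
    and "odd (length w)" "5 \<le> length w"
  shows "\<exists>y b. length y = length w div 2 \<and> is_subword (thue_morse y) w \<and>
    is_subword (thue_morse (y @ [b] @ y)) (w @ [a] @ w)"
proof -
  let ?W = "w @ [a] @ w"
  define n where "n = length w"
  have spf_w: "\<not> has_short_power (7/3) 7 w"
    using spf by (metis has_short_power_subword is_subword_def append_Nil2)
  obtain k0 where "k0 < 4" "w ! k0 = w ! (k0 + 1)"
    using double_in_window[OF spf_w, of 0] assms(3) by auto
  then have k0: "k0 + 1 < n" "w ! k0 = w ! (k0 + 1)" using assms(3) n_def by simp_all
  then obtain p0 where p0: "0 < p0" "p0 + 2 < length ?W" "?W ! p0 = ?W ! (p0 + 1)"
    "even p0 \<longleftrightarrow> even k0"
    using odd_doubled_word_double_image[OF assms(2)] n_def by blast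
  have W_parity: "even p \<longleftrightarrow> even k0"
    if "0 < p" "p + 2 < length ?W" "?W ! p = ?W ! (p + 1)" for p
    using doubles_same_parity[OF spf that p0(1-3)] p0(4) by simp
  have w_parity: "even k \<longleftrightarrow> even k0" if "k + 1 < n" "w ! k = w ! (k + 1)" for k
    using odd_doubled_word_double_image[OF assms(2)] that W_parity n_def by blast
  show ?thesis
  proof (cases "even k0")
    case True
    have "a \<noteq> w ! 0"
    proof
      assume "a = w ! 0"
      moreover have "w \<noteq> []" using assms(3) by auto
      ultimately have "?W ! n = ?W ! (n + 1)" using n_def by (simp add: nth_append)
      then have "even n \<longleftrightarrow> even k0" by (intro W_parity) (use assms(3) n_def in auto)
      with True assms(2) n_def show False by simp
    qed
    then obtain y where "length y = n div 2" "is_subword (thue_morse y) w"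
      "is_subword (thue_morse (y @ [a] @ y)) ?W"
      using doubled_word_desubstitution_Cons[OF assms(2)] w_parity True n_def by blast
    then show ?thesis using n_def by blast
  next
    case False
    have "a \<noteq> last w"
    proof
      assume "a = last w"
      moreover have "w \<noteq> []" using assms(3) by auto
      ultimately have "?W ! (n - 1) = ?W ! (n - 1 + 1)"
        using n_def by (simp add: nth_append last_conv_nth)
      then have "even (n - 1) \<longleftrightarrow> even k0"
        by (intro W_parity) (use assms(3) n_def in simp_all)
      with False assms(2) n_def show False by simp
    qed
    then show ?thesis
      using doubled_word_desubstitution_snoc[OF assms(2)] w_parity False n_def by blast
  qed
qed

theorem lemma5:
  fixes i j :: nat and w :: "bool list" and a :: bool
  assumes "power_free (7/3) w"
    and "length w = (7 + 2*j) * 2^i - 1"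
  shows "\<exists>x \<beta>. is_subword x (w @ [a] @ w) \<and> length x \<le> 7 * 2^i \<and>
           \<beta> \<ge> 7/3 \<and> is_beta_power x \<beta>"
  unfolding has_short_power_def[symmetric]
  using assms
proof (induction i arbitrary: w a)
  case 0
  then have "even (length w)" "6 \<le> length w" by simp_all
  then show ?case using even_doubled_word_has_short_power[of w a] by simp
next
  case (Suc i)
  show ?case
  proof (rule ccontr)
    assume no_short_power: "\<not> has_short_power (7/3) (7 * 2 ^ Suc i) (w @ [a] @ w)"
    have "7 \<le> (7 + 2 * j) * 2 ^ i" using mult_le_mono[of 7 "7 + 2 * j" 1 "2 ^ i"] by simp
    then have len_w: "length w = 2 * ((7 + 2 * j) * 2 ^ i - 1) + 1" using Suc.prems(2) by simp
    have "\<not> has_short_power (7/3) 7 (w @ [a] @ w)"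
      using no_short_power has_short_power_mono[of _ 7 _ "7 * 2 ^ Suc i"] by auto
    moreover have "odd (length w)" "5 \<le> length w" using len_w \<open>7 \<le> _\<close> by simp_all
    ultimately obtain y b where "length y = length w div 2" and y: "is_subword (thue_morse y) w"
      "is_subword (thue_morse (y @ [b] @ y)) (w @ [a] @ w)"
      using odd_doubled_word_thue_morse_desubstitution by blast
    then have "length y = (7 + 2 * j) * 2 ^ i - 1" using len_w by simp
    moreover have "power_free (7/3) y"
      using Suc.prems(1) y(1) power_free_subword power_free_thue_morse_preimage by blast
    ultimately have "has_short_power (7/3) (7 * 2 ^ i) (y @ [b] @ y)" by (rule Suc.IH[rotated])
    then have "has_short_power (7/3) (2 * (7 * 2 ^ i)) (w @ [a] @ w)"
      using y(2) by (rule has_short_power_thue_morse)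
    then show False using no_short_power by (simp add: mult.left_commute)
  qed
qed

end
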